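(* Suppose $f$ satisfies conditions (a)–(b) below with constant $L$, $h\ge0$ and $L(T^2+Th)\le\frac1{12}$. For $x,y\in\mathbb R^d$ let $\Phi_{x,y}:\mathbb R^d\to\mathbb R^d$ be a map with $\tilde q_{T,h}(x,v)=q_T(y,\Phi_{x,y}(v))$ for all $v$. Then for all $x,y,v\in\mathbb R^d$, \[ \|\Phi_{x,y}(v)-v\|\le\frac3{2T}\|x-y\|+\frac75h\Big(\frac1{5T}\|v\|+\frac7{36}L\|x\|\Big). \]
   Context: $f:\mathbb R^d\to\mathbb R$. Conditions: (a) $f$ has global minimum at $0$, $f(0)=0$; (b) $f\in C^2$, $\|\nabla^2f(x)\|_{op}\le L$ for all $x$. $q_t(x,v)$ is the time-$t$ position of the solution of $\dot x=v,\dot v=-\nabla f(x)$ from $(x,v)$. For $h>0$ with $T/h\in\mathbb N$ (always assumed), $\tilde q_{T,h}(x,v)=x_N$, $N=T/h$, where $x_0=x,v_0=v$, $x_{j+1}=x_j+hv_j-\frac{h^2}2\nabla f(x_j)$, $v_{j+1}=v_j-\frac h2(\nabla f(x_j)+\nabla f(x_{j+1}))$; $\tilde q_{T,0}=q_T$. *)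

theory Defs
  imports "HOL-Analysis.Analysis"
begin

text \<open>Hamiltonian trajectory: (X,V) solves x' = v, v' = - grad f(x) for all times,
  with initial data (x,v) at time 0. Here g is the gradient of f.\<close>
definition ham_traj :: "('a::euclidean_space \<Rightarrow> 'a) \<Rightarrow> 'a \<Rightarrow> 'a \<Rightarrow> (real \<Rightarrow> 'a) \<Rightarrow> (real \<Rightarrow> 'a) \<Rightarrow> bool" where
  "ham_traj g x v X V \<longleftrightarrow> X 0 = x \<and> V 0 = v \<and>
     (\<forall>t. (X has_vector_derivative V t) (at t)) \<and>
     (\<forall>t. (V has_vector_derivative - g (X t)) (at t))"

definition ham_q :: "('a::euclidean_space \<Rightarrow> 'a) \<Rightarrow> real \<Rightarrow> 'a \<Rightarrow> 'a \<Rightarrow> 'a" where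
  "ham_q g t x v = (THE p. \<exists>X V. ham_traj g x v X V \<and> X t = p)"

definition lf_step :: "('a::euclidean_space \<Rightarrow> 'a) \<Rightarrow> real \<Rightarrow> 'a \<times> 'a \<Rightarrow> 'a \<times> 'a" where
  "lf_step g h p = (let x = fst p; v = snd p; x' = x + h *\<^sub>R v - (h^2/2) *\<^sub>R g x
                    in (x', v - (h/2) *\<^sub>R (g x + g x')))"

definition lf_q :: "('a::euclidean_space \<Rightarrow> 'a) \<Rightarrow> real \<Rightarrow> real \<Rightarrow> 'a \<Rightarrow> 'a \<Rightarrow> 'a" where
  "lf_q g T h x v = (if h = 0 then ham_q g T x v
                     else fst ((lf_step g h ^^ nat \<lfloor>T / h\<rfloor>) (x, v)))"

end

theory Submission
  imports Defs
begin

text \<open>Put \<open>u = \<Phi> v\<close> and let \<open>(X, V)\<close> be the exact trajectory from \<open>(y, u)\<close>, so that \<open>X T\<close> is the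
  leapfrog endpoint \<open>x\<^sub>N\<close>. The errors \<open>e\<^sub>j = X (j h) - x\<^sub>j\<close> and \<open>f\<^sub>j = V (j h) - v\<^sub>j\<close> obey the
  leapfrog recursion up to local defects of order \<open>L W h\<^sup>3\<close> and \<open>L W h\<^sup>2\<close>, where \<open>W\<close> bounds the
  velocity on \<open>[0, T]\<close>. Summing them, \<open>e\<^sub>j\<close> stays within \<open>L (T\<^sup>2 + T h / 2) max |e| + O(L h T\<^sup>2 W)\<close>
  of its linearisation \<open>e\<^sub>0 + j h f\<^sub>0\<close>. At \<open>j = N\<close> we have \<open>e\<^sub>N = 0\<close>, \<open>e\<^sub>0 = y - x\<close> and \<open>f\<^sub>0 = u - v\<close>,
  so \<open>T |u - v| \<le> |x - y|\<close> plus small terms, which \<open>L (T\<^sup>2 + T h) \<le> 1/12\<close> absorbs. For \<open>h = 0\<close> the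
  same comparison is made between two exact trajectories. Existence of the exact flow comes from
  Picard iteration; its uniqueness at time \<open>T\<close> from the comparison estimate.\<close>

section \<open>Global solutions of globally Lipschitz ODEs\<close>

primrec picard_iter :: "('b::banach \<Rightarrow> 'b) \<Rightarrow> 'b \<Rightarrow> nat \<Rightarrow> real \<Rightarrow> 'b" where
  "picard_iter F z 0 = (\<lambda>t. z)"
| "picard_iter F z (Suc n) = (\<lambda>t. z + integral {0..t} (\<lambda>s. F (picard_iter F z n s)))"

lemma integral_monomial:
  fixes t c :: real
  assumes "0 \<le> t"
  shows "integral {0..t} (\<lambda>s. c * s ^ k) = c * t ^ Suc k / Suc k"
proof -
  have "((\<lambda>s. c * s ^ k) has_integral (c * t ^ Suc k / Suc k - c * 0 ^ Suc k / Suc k)) {0..t}"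
    by (intro fundamental_theorem_of_calculus[OF assms])
      (auto simp: has_real_derivative_iff_has_vector_derivative[symmetric] intro!: derivative_eq_intros,
       cases k, auto simp: field_simps)
  from integral_unique[OF this] show ?thesis
    by simp
qed

lemma continuous_on_picard_iter:
  assumes "continuous_on UNIV F"
  shows "continuous_on {0..K} (picard_iter F z n)"
proof (induction n arbitrary: K)
  case (Suc n)
  have "continuous_on {0..K} (\<lambda>s. F (picard_iter F z n s))"
    using continuous_on_compose2[OF assms Suc.IH] by auto
  then have "continuous_on {0..K} (\<lambda>t. integral {0..t} (\<lambda>s. F (picard_iter F z n s)))"
    by (intro indefinite_integral_continuous_1 integrable_continuous_real)
  then show ?case
    by (auto intro!: continuous_intros)
qed simp

lemma picard_iter_step_bound:
  assumes F: "C-lipschitz_on UNIV F" and t: "0 \<le> t"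
  shows "norm (picard_iter F z (Suc n) t - picard_iter F z n t)
    \<le> norm (F z) * C ^ n * t ^ Suc n / fact (Suc n)"
  using t
proof (induction n arbitrary: t)
  case (Suc n)
  let ?P = "picard_iter F z"
  have C: "0 \<le> C"
    using F by (rule lipschitz_on_nonneg)
  have contF: "continuous_on UNIV F"
    using F by (rule lipschitz_on_continuous_on)
  have cont: "continuous_on {0..t} (\<lambda>s. F (?P m s))" for m
    using continuous_on_compose2[OF contF continuous_on_picard_iter[OF contF]] by auto
  have "?P (Suc (Suc n)) t - ?P (Suc n) t
      = integral {0..t} (\<lambda>s. F (?P (Suc n) s)) - integral {0..t} (\<lambda>s. F (?P n s))"
    by simp
  also have "\<dots> = integral {0..t} (\<lambda>s. F (?P (Suc n) s) - F (?P n s))"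
    by (intro integral_diff[symmetric] integrable_continuous_real cont)
  also have "norm \<dots> \<le> integral {0..t} (\<lambda>s. (C * norm (F z) * C ^ n / fact (Suc n)) * s ^ Suc n)"
  proof (rule integral_norm_bound_integral)
    fix s assume s: "s \<in> {0..t}"
    have "norm (F (?P (Suc n) s) - F (?P n s)) \<le> C * norm (?P (Suc n) s - ?P n s)"
      using F by (rule lipschitz_on_normD) auto
    also have "\<dots> \<le> C * (norm (F z) * C ^ n * s ^ Suc n / fact (Suc n))"
      using Suc.IH[of s] s C by (intro mult_left_mono) auto
    finally show "norm (F (?P (Suc n) s) - F (?P n s)) \<le> C * norm (F z) * C ^ n / fact (Suc n) * s ^ Suc n"
      by (simp add: field_simps)
  qed (auto intro!: integrable_diff integrable_continuous_real continuous_intros cont simp del: picard_iter.simps)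
  also have "\<dots> = (C * norm (F z) * C ^ n / fact (Suc n)) * t ^ Suc (Suc n) / Suc (Suc n)"
    using Suc.prems by (rule integral_monomial)
  also have "\<dots> = norm (F z) * C ^ Suc n * t ^ Suc (Suc n) / fact (Suc (Suc n))"
    by (simp add: field_simps)
  finally show ?case .
qed simp

lemma picard_iter_uniform_limit:
  assumes F: "C-lipschitz_on UNIV F"
  obtains Y where "\<And>K. 0 \<le> K \<Longrightarrow> uniform_limit {0..K} (picard_iter F z) Y sequentially"
proof
  let ?d = "\<lambda>i t. picard_iter F z (Suc i) t - picard_iter F z i t"
  fix K :: real assume K: "0 \<le> K"
  have C: "0 \<le> C"
    using F by (rule lipschitz_on_nonneg)
  have "uniform_limit {0..K} (\<lambda>n t. \<Sum>i<n. ?d i t) (\<lambda>t. \<Sum>i. ?d i t) sequentially"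
  proof (rule Weierstrass_m_test)
    fix i t assume t: "t \<in> {0..K}"
    have "norm (?d i t) \<le> norm (F z) * C ^ i * t ^ Suc i / fact (Suc i)"
      using picard_iter_step_bound[OF F] t by auto
    also have "\<dots> \<le> norm (F z) * C ^ i * K ^ Suc i / fact i"
      using t C by (intro frac_le mult_left_mono power_mono) (auto simp: fact_mono)
    also have "\<dots> = norm (F z) * K * ((C * K) ^ i / fact i)"
      by (simp add: power_mult_distrib)
    finally show "norm (?d i t) \<le> norm (F z) * K * ((C * K) ^ i / fact i)" .
  next
    show "summable (\<lambda>i. norm (F z) * K * ((C * K) ^ i / fact i))"
      using summable_exp_generic[of "C * K"] by (intro summable_mult) (simp add: divide_inverse mult.commute)
  qed
  then have "uniform_limit {0..K} (\<lambda>n t. z + (\<Sum>i<n. ?d i t)) (\<lambda>t. z + (\<Sum>i. ?d i t)) sequentially"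
    by (intro uniform_limit_intros)
  moreover have "(\<lambda>n t. z + (\<Sum>i<n. ?d i t)) = picard_iter F z"
    by (intro ext) (simp add: sum_lessThan_telescope[of "\<lambda>i. picard_iter F z i _"] del: picard_iter.simps(2))
  ultimately show "uniform_limit {0..K} (picard_iter F z) (\<lambda>t. z + (\<Sum>i. ?d i t)) sequentially"
    by simp
qed

lemma picard_limit_integral_equation:
  assumes F: "C-lipschitz_on UNIV F"
    and lim: "\<And>K. 0 \<le> K \<Longrightarrow> uniform_limit {0..K} (picard_iter F z) Y sequentially"
    and t: "0 \<le> t"
  shows "Y t = z + integral {0..t} (\<lambda>s. F (Y s))"
proof -
  let ?P = "picard_iter F z"
  have contF: "continuous_on UNIV F"
    using F by (rule lipschitz_on_continuous_on)
  have "uniform_limit {0..t} (\<lambda>n s. F (?P n s)) (F \<circ> Y) sequentially"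
    by (rule uniform_limit_compose[OF lim[OF t] lipschitz_on_uniformly_continuous[OF F]]) auto
  then obtain I J where I: "\<And>n. ((\<lambda>s. F (?P n s)) has_integral I n) {0..t}"
    and J: "((F \<circ> Y) has_integral J) {0..t}" and IJ: "I \<longlonglongrightarrow> J"
    using continuous_on_compose2[OF contF continuous_on_picard_iter[OF contF]]
    by (auto elim!: uniform_limit_integral)
  have "(\<lambda>n. ?P (Suc n) t) \<longlonglongrightarrow> z + J"
    using integral_unique[OF I] tendsto_add[OF tendsto_const IJ] by simp
  moreover have "(\<lambda>n. ?P n t) \<longlonglongrightarrow> Y t"
    using tendsto_uniform_limitI[OF lim[OF t]] t by auto
  then have "(\<lambda>n. ?P (Suc n) t) \<longlonglongrightarrow> Y t"
    by (rule LIMSEQ_Suc)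
  ultimately show ?thesis
    using LIMSEQ_unique integral_unique[OF J] by (auto simp: o_def)
qed

lemma lipschitz_ode_forward_solution:
  fixes F :: "'b::banach \<Rightarrow> 'b"
  assumes F: "C-lipschitz_on UNIV F"
  obtains Y where "Y 0 = z" "\<And>t. 0 \<le> t \<Longrightarrow> (Y has_vector_derivative F (Y t)) (at t within {0..})"
proof -
  have contF: "continuous_on UNIV F"
    using F by (rule lipschitz_on_continuous_on)
  obtain Y where lim: "\<And>K. 0 \<le> K \<Longrightarrow> uniform_limit {0..K} (picard_iter F z) Y sequentially"
    using picard_iter_uniform_limit[OF F] by blast
  note integral_eq = picard_limit_integral_equation[OF F lim]
  have "(Y has_vector_derivative F (Y t)) (at t within {0..})" if t: "0 \<le> t" for t
  proof -
    have "continuous_on {0..t+1} (\<lambda>s. F (Y s))"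
      using uniform_limit_theorem[OF _ lim] continuous_on_picard_iter[OF contF] t
      by (intro continuous_on_compose2[OF contF]) auto
    then have "((\<lambda>u. z + integral {0..u} (\<lambda>s. F (Y s))) has_vector_derivative F (Y t))
        (at t within {0..t+1})"
      using t by (auto intro!: derivative_eq_intros integral_has_vector_derivative)
    then have "(Y has_vector_derivative F (Y t)) (at t within {0..t+1})"
      by (rule has_vector_derivative_transform[rotated 2]) (use t integral_eq in auto)
    moreover have "at t within {0..t+1} = at t within {0..}"
      by (rule at_within_nhd[of _ "{..<t+1}"]) auto
    ultimately show ?thesis
      by simp
  qed
  moreover have "Y 0 = z"
    using integral_eq[of 0] by simp
  ultimately show ?thesis
    using that by blast
qed

lemma has_vector_derivative_mirror_within:
  assumes "(f has_vector_derivative f') (at (- t) within uminus ` S)"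
  shows "((\<lambda>t. f (- t)) has_vector_derivative - f') (at t within S)"
proof -
  have "(uminus has_vector_derivative (-1)) (at t within S)"
    by (auto intro!: derivative_eq_intros)
  from vector_diff_chain_within[OF this assms] show ?thesis
    by (simp add: o_def)
qed

lemma lipschitz_ode_solution:
  fixes F :: "'b::banach \<Rightarrow> 'b"
  assumes F: "C-lipschitz_on UNIV F"
  obtains Y where "Y 0 = z" "\<And>t. (Y has_vector_derivative F (Y t)) (at t)"
proof -
  obtain Y1 where Y1: "Y1 0 = z" "\<And>t. 0 \<le> t \<Longrightarrow> (Y1 has_vector_derivative F (Y1 t)) (at t within {0..})"
    using lipschitz_ode_forward_solution[OF F] by blast
  obtain Y2 where Y2: "Y2 0 = z" "\<And>t. 0 \<le> t \<Longrightarrow> (Y2 has_vector_derivative - F (Y2 t)) (at t within {0..})"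
    using lipschitz_ode_forward_solution[of C "\<lambda>p. - F p"] F by auto
  have backward: "((\<lambda>t. Y2 (- t)) has_vector_derivative F (Y2 (- t))) (at t within {..0})" if "t \<le> 0" for t
    using has_vector_derivative_mirror_within[of Y2 "- F (Y2 (- t))" t "{..0}"] Y2(2)[of "- t"] that
    by simp
  define Y where "Y t = (if t \<in> {0..} then Y1 t else Y2 (- t))" for t
  have "(Y has_vector_derivative F (Y t)) (at t)" for t
  proof -
    have "(Y has_vector_derivative (if t \<in> {0..} then F (Y1 t) else F (Y2 (- t)))) (at t within UNIV)"
      unfolding Y_def[abs_def]
    proof (rule has_vector_derivative_If_within_closures[where T = "{..<0}"])
      show "(Y1 has_vector_derivative F (Y1 t)) (at t within {0..} \<union> closure {0..} \<inter> closure {..<0})"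
        if "t \<in> {0..} \<union> closure {0..} \<inter> closure {..<0}"
        using that Y1(2)[of t] by (auto simp: Un_absorb2)
      have "{..<0} \<union> closure {0..} \<inter> closure {..<0} = {..0::real}"
        by auto
      then show "((\<lambda>t. Y2 (- t)) has_vector_derivative F (Y2 (- t)))
          (at t within {..<0} \<union> closure {0..} \<inter> closure {..<0})"
        if "t \<in> {..<0} \<union> closure {0..} \<inter> closure {..<0}"
        using that backward[of t] by auto
    qed (use Y1 Y2 in auto)
    then show ?thesis
      by (simp add: Y_def if_distrib)
  qed
  moreover have "Y 0 = z"
    using Y1 by (simp add: Y_def)
  ultimately show ?thesis
    using that by blast
qed

section \<open>Hamiltonian trajectories\<close>

lemma has_vector_derivative_fst:
  "(f has_vector_derivative f') F \<Longrightarrow> ((\<lambda>x. fst (f x)) has_vector_derivative fst f') F"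
  unfolding has_vector_derivative_def by (drule has_derivative_fst) simp

lemma has_vector_derivative_snd:
  "(f has_vector_derivative f') F \<Longrightarrow> ((\<lambda>x. snd (f x)) has_vector_derivative snd f') F"
  unfolding has_vector_derivative_def by (drule has_derivative_snd) simp

lemma norm_diff_le_derivative_bound:
  fixes f :: "real \<Rightarrow> 'b::real_normed_vector"
  assumes ab: "a \<le> b"
    and f': "\<And>s. a \<le> s \<Longrightarrow> s \<le> b \<Longrightarrow> (f has_vector_derivative f' s) (at s)"
    and B: "\<And>s. a \<le> s \<Longrightarrow> s \<le> b \<Longrightarrow> norm (f' s) \<le> B"
  shows "norm (f b - f a) \<le> B * (b - a)"
proof (cases "a = b")
  case False
  have "continuous_on {a..b} f"
    using f' by (intro continuous_at_imp_continuous_on ballI has_vector_derivative_continuous) auto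
  then have "norm (f b - f a) \<le> B * b - B * a"
    using False ab f' B
    by (intro differentiable_bound_general[of a b f "\<lambda>s. B * s" f' "\<lambda>_. B"])
      (auto intro!: continuous_intros derivative_eq_intros
        simp: has_real_derivative_iff_has_vector_derivative[symmetric])
  then show ?thesis
    by (simp add: algebra_simps)
qed simp

lemma interval_norm_attains_max:
  fixes f :: "real \<Rightarrow> 'b::real_normed_vector"
  assumes "a \<le> b" "continuous_on {a..b} f"
  obtains s where "a \<le> s" "s \<le> b" "\<And>t. a \<le> t \<Longrightarrow> t \<le> b \<Longrightarrow> norm (f t) \<le> norm (f s)"
proof -
  have "\<exists>s\<in>{a..b}. \<forall>t\<in>{a..b}. norm (f t) \<le> norm (f s)"
    using assms by (intro continuous_attains_sup) (auto intro!: continuous_intros)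
  then show ?thesis
    using that by auto
qed

lemma ham_trajD:
  assumes "ham_traj g y u X V"
  shows "X 0 = y" "V 0 = u" "(X has_vector_derivative V t) (at t)"
    "(V has_vector_derivative - g (X t)) (at t)"
  using assms by (auto simp: ham_traj_def)

lemma ham_traj_continuous:
  assumes "ham_traj g y u X V"
  shows "continuous_on S X" "continuous_on S V"
  using ham_trajD[OF assms]
  by (auto intro!: continuous_at_imp_continuous_on has_vector_derivative_continuous)

locale lipschitz_field =
  fixes g :: "'a::euclidean_space \<Rightarrow> 'a" and L :: real
  assumes lipschitz: "L-lipschitz_on UNIV g"
begin

lemma L_nonneg: "0 \<le> L"
  using lipschitz by (rule lipschitz_on_nonneg)

lemma g_lipschitz: "norm (g a - g b) \<le> L * norm (a - b)"
  using lipschitz by (rule lipschitz_on_normD) auto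

lemma ham_traj_exists:
  obtains X V where "ham_traj g x v X V"
proof -
  have fst: "1-lipschitz_on UNIV (fst :: 'a \<times> 'a \<Rightarrow> 'a)"
    and snd: "1-lipschitz_on UNIV (snd :: 'a \<times> 'a \<Rightarrow> 'a)"
    by (intro lipschitz_onI; simp add: dist_fst_le dist_snd_le)+
  have "(L * 1)-lipschitz_on UNIV (\<lambda>p::'a \<times> 'a. g (fst p))"
    using lipschitz by (intro lipschitz_on_compose2[OF fst]) (rule lipschitz_on_subset, auto)
  then have "(sqrt (1\<^sup>2 + (L * 1)\<^sup>2))-lipschitz_on UNIV (\<lambda>p::'a \<times> 'a. (snd p, - g (fst p)))"
    by (intro lipschitz_on_Pair snd lipschitz_on_minus)
  then obtain Y where Y: "Y 0 = (x, v)" "\<And>t. (Y has_vector_derivative (snd (Y t), - g (fst (Y t)))) (at t)"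
    using lipschitz_ode_solution[where z = "(x, v)"] by blast
  have "ham_traj g x v (\<lambda>t. fst (Y t)) (\<lambda>t. snd (Y t))"
    unfolding ham_traj_def
    using Y has_vector_derivative_fst[OF Y(2)] has_vector_derivative_snd[OF Y(2)] by simp
  then show ?thesis
    using that by blast
qed

lemma ham_traj_diff_taylor:
  assumes tr1: "ham_traj g y1 u1 X1 V1" and tr2: "ham_traj g y2 u2 X2 V2"
    and M: "\<And>s. 0 \<le> s \<Longrightarrow> s \<le> T \<Longrightarrow> norm (X1 s - X2 s) \<le> M"
    and t: "0 \<le> t" "t \<le> T"
  shows "norm (X1 t - X2 t - (y1 - y2) - t *\<^sub>R (u1 - u2)) \<le> L * M * T * t"
proof -
  note d1 = ham_trajD[OF tr1] and d2 = ham_trajD[OF tr2]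
  have M0: "0 \<le> M"
    using order_trans[OF norm_ge_zero M[of 0]] t by simp
  have velocity: "norm ((V1 s - V2 s) - (u1 - u2)) \<le> L * M * s" if "0 \<le> s" "s \<le> T" for s
  proof -
    have "norm ((V1 s - V2 s) - (V1 0 - V2 0)) \<le> L * M * (s - 0)"
    proof (rule norm_diff_le_derivative_bound[of 0 s _ "\<lambda>\<sigma>. g (X2 \<sigma>) - g (X1 \<sigma>)"])
      fix \<sigma> assume \<sigma>: "0 \<le> \<sigma>" "\<sigma> \<le> s"
      show "((\<lambda>s. V1 s - V2 s) has_vector_derivative g (X2 \<sigma>) - g (X1 \<sigma>)) (at \<sigma>)"
        using has_vector_derivative_diff[OF d1(4) d2(4)] by simp
      have "norm (g (X2 \<sigma>) - g (X1 \<sigma>)) \<le> L * norm (X1 \<sigma> - X2 \<sigma>)"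
        using g_lipschitz by (metis norm_minus_commute)
      also have "\<dots> \<le> L * M"
        using M[of \<sigma>] \<sigma> that L_nonneg by (intro mult_left_mono) auto
      finally show "norm (g (X2 \<sigma>) - g (X1 \<sigma>)) \<le> L * M" .
    qed (use that in auto)
    then show ?thesis
      using d1 d2 by simp
  qed
  have "norm ((X1 t - X2 t - t *\<^sub>R (u1 - u2)) - (X1 0 - X2 0 - 0 *\<^sub>R (u1 - u2))) \<le> L * M * T * (t - 0)"
  proof (rule norm_diff_le_derivative_bound[of 0 t _ "\<lambda>s. (V1 s - V2 s) - (u1 - u2)"])
    fix s assume s: "0 \<le> s" "s \<le> t"
    show "((\<lambda>s. X1 s - X2 s - s *\<^sub>R (u1 - u2)) has_vector_derivative (V1 s - V2 s) - (u1 - u2)) (at s)"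
      by (auto intro!: derivative_eq_intros d1(3) d2(3))
    have "norm ((V1 s - V2 s) - (u1 - u2)) \<le> L * M * s"
      using velocity[of s] s t by auto
    also have "\<dots> \<le> L * M * T"
      using s t L_nonneg M0 by (intro mult_left_mono) auto
    finally show "norm ((V1 s - V2 s) - (u1 - u2)) \<le> L * M * T" .
  qed (use t in auto)
  then show ?thesis
    using d1 d2 by (simp add: algebra_simps)
qed

lemma ham_traj_compare:
  assumes T: "0 \<le> T" and small: "L * T\<^sup>2 < 1"
    and tr1: "ham_traj g y1 u1 X1 V1" and tr2: "ham_traj g y2 u2 X2 V2"
  shows "norm (X1 T - X2 T - (y1 - y2) - T *\<^sub>R (u1 - u2))
     \<le> L * T\<^sup>2 / (1 - L * T\<^sup>2) * (norm (y1 - y2) + T * norm (u1 - u2))"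
proof -
  have "continuous_on {0..T} (\<lambda>s. X1 s - X2 s)"
    using ham_traj_continuous[OF tr1] ham_traj_continuous[OF tr2] by (intro continuous_intros)
  then obtain s0 where s0: "0 \<le> s0" "s0 \<le> T"
    and max: "\<And>s. 0 \<le> s \<Longrightarrow> s \<le> T \<Longrightarrow> norm (X1 s - X2 s) \<le> norm (X1 s0 - X2 s0)"
    using interval_norm_attains_max[OF T] by blast
  define M where "M = norm (X1 s0 - X2 s0)"
  have taylor: "norm (X1 t - X2 t - (y1 - y2) - t *\<^sub>R (u1 - u2)) \<le> L * M * T * t"
    if "0 \<le> t" "t \<le> T" for t
    by (rule ham_traj_diff_taylor[OF tr1 tr2]) (use max that in \<open>auto simp: M_def\<close>)
  have "M = norm ((X1 s0 - X2 s0 - (y1 - y2) - s0 *\<^sub>R (u1 - u2)) + (y1 - y2) + s0 *\<^sub>R (u1 - u2))"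
    by (simp add: M_def)
  also have "\<dots> \<le> L * M * T * s0 + norm (y1 - y2) + T * norm (u1 - u2)"
    using taylor[OF s0] s0 by (intro norm_triangle_le add_mono) (auto intro: mult_right_mono)
  also have "L * M * T * s0 \<le> L * M * T * T"
    using s0 T L_nonneg by (intro mult_left_mono) (auto simp: M_def)
  finally have "M \<le> (norm (y1 - y2) + T * norm (u1 - u2)) / (1 - L * T\<^sup>2)"
    using small by (simp add: field_simps power2_eq_square)
  then have "L * T\<^sup>2 * M \<le> L * T\<^sup>2 * ((norm (y1 - y2) + T * norm (u1 - u2)) / (1 - L * T\<^sup>2))"
    using L_nonneg by (intro mult_left_mono) auto
  moreover have "norm (X1 T - X2 T - (y1 - y2) - T *\<^sub>R (u1 - u2)) \<le> L * T\<^sup>2 * M"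
    using taylor[of T] T by (simp add: power2_eq_square mult.commute mult.left_commute)
  ultimately show ?thesis
    by simp
qed

lemma ham_q_eqI:
  assumes "0 \<le> T" "L * T\<^sup>2 < 1" and tr: "ham_traj g y u X V"
  shows "ham_q g T y u = X T"
  unfolding ham_q_def
proof (rule the_equality)
  show "\<exists>X' V'. ham_traj g y u X' V' \<and> X' T = X T"
    using tr by blast
  fix p assume "\<exists>X' V'. ham_traj g y u X' V' \<and> X' T = p"
  then obtain X' V' where tr': "ham_traj g y u X' V'" and "X' T = p"
    by blast
  then show "p = X T"
    using ham_traj_compare[OF assms(1,2) tr' tr] by simp
qed

end

section \<open>Leapfrog error analysis\<close>

lemma norm_diff_le_steps:
  fixes a :: "nat \<Rightarrow> 'a::real_normed_vector"
  assumes "\<And>i. i < j \<Longrightarrow> norm (a (Suc i) - a i) \<le> B"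
  shows "norm (a j - a 0) \<le> real j * B"
proof -
  have "norm (a j - a 0) = norm (\<Sum>i<j. a (Suc i) - a i)"
    by (simp add: sum_lessThan_telescope)
  also have "\<dots> \<le> (\<Sum>i<j. norm (a (Suc i) - a i))"
    by (rule norm_sum)
  also have "\<dots> \<le> real j * B"
    using assms by (intro sum_bounded_above[where A = "{..<j}", simplified]) auto
  finally show ?thesis .
qed

lemma second_order_error_accumulation:
  fixes e f :: "nat \<Rightarrow> 'a::real_normed_vector"
  assumes h: "0 \<le> h" and L: "0 \<le> L" and Rb: "0 \<le> Rb"
    and A: "\<And>j. j \<le> N \<Longrightarrow> norm (e j) \<le> A"
    and e_step: "\<And>j. j < N \<Longrightarrow> norm (e (Suc j) - e j - h *\<^sub>R f j) \<le> h\<^sup>2/2 * L * norm (e j) + Ra"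
    and f_step: "\<And>j. j < N \<Longrightarrow>
      norm (f (Suc j) - f j) \<le> h/2 * L * (norm (e j) + norm (e (Suc j))) + Rb"
    and j: "j \<le> N"
  shows "norm (e j - e 0 - (real j * h) *\<^sub>R f 0)
    \<le> real j * (h * real N * (h * L * A + Rb) + h\<^sup>2/2 * L * A + Ra)"
proof -
  have A0: "0 \<le> A"
    using A[of 0] norm_ge_zero[of "e 0"] by linarith
  have f_drift: "norm (f i - f 0) \<le> real N * (h * L * A + Rb)" if "i \<le> N" for i
  proof -
    have "norm (f (Suc k) - f k) \<le> h * L * A + Rb" if "k < i" for k
    proof -
      have "h/2 * L * (norm (e k) + norm (e (Suc k))) \<le> h/2 * L * (A + A)"
        using A[of k] A[of "Suc k"] that \<open>i \<le> N\<close> h L by (intro mult_left_mono add_mono) auto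
      then show ?thesis
        using f_step[of k] that \<open>i \<le> N\<close> by simp
    qed
    then have "norm (f i - f 0) \<le> real i * (h * L * A + Rb)"
      by (rule norm_diff_le_steps)
    also have "\<dots> \<le> real N * (h * L * A + Rb)"
      using that h L A0 Rb by (intro mult_right_mono) auto
    finally show ?thesis .
  qed
  have "norm ((e (Suc i) - e 0 - (real (Suc i) * h) *\<^sub>R f 0) - (e i - e 0 - (real i * h) *\<^sub>R f 0))
      \<le> h * real N * (h * L * A + Rb) + h\<^sup>2/2 * L * A + Ra" if "i < j" for i
  proof -
    have "(e (Suc i) - e 0 - (real (Suc i) * h) *\<^sub>R f 0) - (e i - e 0 - (real i * h) *\<^sub>R f 0)
        = (e (Suc i) - e i - h *\<^sub>R f i) + h *\<^sub>R (f i - f 0)"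
      by (simp add: algebra_simps)
    also have "norm \<dots> \<le> (h\<^sup>2/2 * L * A + Ra) + h * (real N * (h * L * A + Rb))"
    proof (intro norm_triangle_le add_mono)
      have "h\<^sup>2/2 * L * norm (e i) \<le> h\<^sup>2/2 * L * A"
        using A[of i] that j h L by (intro mult_left_mono) auto
      then show "norm (e (Suc i) - e i - h *\<^sub>R f i) \<le> h\<^sup>2/2 * L * A + Ra"
        using e_step[of i] that j by linarith
      show "norm (h *\<^sub>R (f i - f 0)) \<le> h * (real N * (h * L * A + Rb))"
        using f_drift[of i] that j h by (simp add: mult_left_mono)
    qed
    finally show ?thesis
      by (simp add: algebra_simps)
  qed
  then show ?thesis
    using norm_diff_le_steps[of j "\<lambda>i. e i - e 0 - (real i * h) *\<^sub>R f 0"] by simp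
qed

context lipschitz_field
begin

lemma ham_traj_velocity_bound:
  assumes g0: "g 0 = 0" and T: "0 \<le> T" and small: "L * T\<^sup>2 < 1"
    and tr: "ham_traj g y u X V" and s: "0 \<le> s" "s \<le> T"
  shows "norm (V s) \<le> (norm u + L * T * norm y) / (1 - L * T\<^sup>2)"
proof -
  note d = ham_trajD[OF tr]
  obtain s1 where s1: "0 \<le> s1" "s1 \<le> T"
    and X_le: "\<And>t. 0 \<le> t \<Longrightarrow> t \<le> T \<Longrightarrow> norm (X t) \<le> norm (X s1)"
    using interval_norm_attains_max[OF T ham_traj_continuous(1)[OF tr]] by blast
  obtain s2 where s2: "0 \<le> s2" "s2 \<le> T"
    and V_le: "\<And>t. 0 \<le> t \<Longrightarrow> t \<le> T \<Longrightarrow> norm (V t) \<le> norm (V s2)"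
    using interval_norm_attains_max[OF T ham_traj_continuous(2)[OF tr]] by blast
  define Xmax where "Xmax = norm (X s1)"
  define Vmax where "Vmax = norm (V s2)"
  have "norm (X s1 - X 0) \<le> Vmax * (s1 - 0)"
    by (rule norm_diff_le_derivative_bound[of 0 s1 _ V]) (use d s1 V_le in \<open>auto simp: Vmax_def\<close>)
  then have "Xmax \<le> norm y + Vmax * s1"
    using d norm_triangle_sub[of "X s1" "X 0"] by (simp add: Xmax_def)
  also have "Vmax * s1 \<le> Vmax * T"
    using s1 by (intro mult_left_mono) (auto simp: Vmax_def)
  finally have Xmax_le: "Xmax \<le> norm y + Vmax * T"
    by simp
  have "norm (V s2 - V 0) \<le> L * Xmax * (s2 - 0)"
  proof (rule norm_diff_le_derivative_bound[of 0 s2 _ "\<lambda>t. - g (X t)"])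
    fix t assume t: "0 \<le> t" "t \<le> s2"
    have "norm (- g (X t)) = norm (g (X t) - g 0)"
      using g0 by simp
    also have "\<dots> \<le> L * norm (X t - 0)"
      by (rule g_lipschitz)
    also have "\<dots> \<le> L * Xmax"
      using X_le[of t] t s2 L_nonneg by (intro mult_left_mono) (auto simp: Xmax_def)
    finally show "norm (- g (X t)) \<le> L * Xmax" .
  qed (use d s2 in auto)
  then have "Vmax \<le> norm u + L * Xmax * s2"
    using d norm_triangle_sub[of "V s2" "V 0"] by (simp add: Vmax_def)
  also have "L * Xmax * s2 \<le> L * Xmax * T"
    using s2 L_nonneg by (intro mult_left_mono) (auto simp: Xmax_def)
  also have "L * Xmax * T \<le> L * T * (norm y + Vmax * T)"
    using Xmax_le L_nonneg T by (metis mult.commute mult.left_commute mult_left_mono zero_le_mult_iff)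
  finally have "Vmax * (1 - L * T\<^sup>2) \<le> norm u + L * T * norm y"
    by (simp add: algebra_simps power2_eq_square)
  then have "Vmax \<le> (norm u + L * T * norm y) / (1 - L * T\<^sup>2)"
    using small by (simp add: field_simps)
  then show ?thesis
    using V_le[OF s] by (simp add: Vmax_def)
qed

lemma ham_traj_velocity_taylor:
  assumes tr: "ham_traj g y u X V" and ts: "t \<le> s"
    and W: "\<And>\<sigma>. t \<le> \<sigma> \<Longrightarrow> \<sigma> \<le> s \<Longrightarrow> norm (V \<sigma>) \<le> W"
  shows "norm (V s - V t + (s - t) *\<^sub>R g (X t)) \<le> L * W * (s - t)\<^sup>2"
proof -
  note d = ham_trajD[OF tr]
  have "norm ((V s + (s - t) *\<^sub>R g (X t)) - (V t + (t - t) *\<^sub>R g (X t))) \<le> L * W * (s - t) * (s - t)"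
  proof (rule norm_diff_le_derivative_bound[OF ts, of _ "\<lambda>\<sigma>. g (X t) - g (X \<sigma>)"])
    fix \<sigma> assume \<sigma>: "t \<le> \<sigma>" "\<sigma> \<le> s"
    show "((\<lambda>\<sigma>. V \<sigma> + (\<sigma> - t) *\<^sub>R g (X t)) has_vector_derivative g (X t) - g (X \<sigma>)) (at \<sigma>)"
      by (auto intro!: derivative_eq_intros d(4))
    have "norm (X t - X \<sigma>) \<le> W * (\<sigma> - t)"
      using norm_diff_le_derivative_bound[OF \<sigma>(1), of X V W] d W \<sigma> by (simp add: norm_minus_commute)
    then have "norm (g (X t) - g (X \<sigma>)) \<le> L * (W * (\<sigma> - t))"
      using g_lipschitz L_nonneg by (meson mult_left_mono order_trans)
    also have "\<dots> \<le> L * (W * (s - t))"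
      using \<sigma> L_nonneg order_trans[OF norm_ge_zero W[OF \<sigma>]] by (intro mult_left_mono) auto
    finally show "norm (g (X t) - g (X \<sigma>)) \<le> L * W * (s - t)"
      by (simp add: mult.assoc)
  qed
  then show ?thesis
    by (simp add: algebra_simps power2_eq_square)
qed

lemma ham_traj_position_taylor:
  assumes tr: "ham_traj g y u X V" and h: "0 \<le> h"
    and W: "\<And>\<sigma>. t \<le> \<sigma> \<Longrightarrow> \<sigma> \<le> t + h \<Longrightarrow> norm (V \<sigma>) \<le> W"
  shows "norm (X (t + h) - X t - h *\<^sub>R V t + (h\<^sup>2/2) *\<^sub>R g (X t)) \<le> L * W * h ^ 3"
proof -
  have W0: "0 \<le> W"
    using W[of t] h norm_ge_zero[of "V t"] by linarith
  have "norm ((X (t + h) - (t + h - t) *\<^sub>R V t + ((t + h - t)\<^sup>2/2) *\<^sub>R g (X t))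
      - (X t - (t - t) *\<^sub>R V t + ((t - t)\<^sup>2/2) *\<^sub>R g (X t))) \<le> L * W * h\<^sup>2 * (t + h - t)"
  proof (rule norm_diff_le_derivative_bound[of t "t + h" _ "\<lambda>\<sigma>. V \<sigma> - V t + (\<sigma> - t) *\<^sub>R g (X t)"])
    fix \<sigma> assume \<sigma>: "t \<le> \<sigma>" "\<sigma> \<le> t + h"
    show "((\<lambda>\<sigma>. X \<sigma> - (\<sigma> - t) *\<^sub>R V t + ((\<sigma> - t)\<^sup>2/2) *\<^sub>R g (X t))
        has_vector_derivative V \<sigma> - V t + (\<sigma> - t) *\<^sub>R g (X t)) (at \<sigma>)"
      by (auto intro!: derivative_eq_intros ham_trajD(3)[OF tr])
    have "norm (V \<sigma> - V t + (\<sigma> - t) *\<^sub>R g (X t)) \<le> L * W * (\<sigma> - t)\<^sup>2"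
      using ham_traj_velocity_taylor[OF tr \<sigma>(1)] W \<sigma> by auto
    also have "\<dots> \<le> L * W * h\<^sup>2"
      using \<sigma> L_nonneg W0 by (intro mult_left_mono power_mono) auto
    finally show "norm (V \<sigma> - V t + (\<sigma> - t) *\<^sub>R g (X t)) \<le> L * W * h\<^sup>2" .
  qed (use h in auto)
  then show ?thesis
    by (simp add: algebra_simps power3_eq_cube power2_eq_square)
qed

lemma ham_traj_trapezoid_defect:
  assumes tr: "ham_traj g y u X V" and h: "0 \<le> h"
    and W: "\<And>\<sigma>. t \<le> \<sigma> \<Longrightarrow> \<sigma> \<le> t + h \<Longrightarrow> norm (V \<sigma>) \<le> W"
  shows "norm (V (t + h) - V t + (h/2) *\<^sub>R (g (X t) + g (X (t + h)))) \<le> 3/2 * L * W * h\<^sup>2"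
proof -
  have halves: "h *\<^sub>R a = (h/2) *\<^sub>R a + (h/2) *\<^sub>R a" for a :: 'a
    by (metis field_sum_of_halves scaleR_add_left)
  have "norm (X (t + h) - X t) \<le> W * h"
    using norm_diff_le_derivative_bound[of t "t + h" X V W] h W ham_trajD(3)[OF tr] by simp
  then have "norm (g (X (t + h)) - g (X t)) \<le> L * (W * h)"
    by (rule order_trans[OF g_lipschitz mult_left_mono[OF _ L_nonneg]])
  then have "norm ((h/2) *\<^sub>R (g (X (t + h)) - g (X t))) \<le> h/2 * (L * (W * h))"
    using h by (simp add: mult_left_mono)
  moreover have "norm (V (t + h) - V t + h *\<^sub>R g (X t)) \<le> L * W * h\<^sup>2"
    using ham_traj_velocity_taylor[OF tr, of t "t + h" W] h W by simp
  moreover have "V (t + h) - V t + (h/2) *\<^sub>R (g (X t) + g (X (t + h)))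
      = (V (t + h) - V t + h *\<^sub>R g (X t)) + (h/2) *\<^sub>R (g (X (t + h)) - g (X t))"
    by (simp add: halves[of "g (X t)"] algebra_simps)
  ultimately have "norm (V (t + h) - V t + (h/2) *\<^sub>R (g (X t) + g (X (t + h))))
      \<le> L * W * h\<^sup>2 + h/2 * (L * (W * h))"
    by (metis add_mono norm_triangle_le)
  then show ?thesis
    by (simp add: algebra_simps power2_eq_square)
qed

lemma leapfrog_step_error:
  assumes tr: "ham_traj g y u X V" and h: "0 \<le> h"
    and W: "\<And>\<sigma>. t \<le> \<sigma> \<Longrightarrow> \<sigma> \<le> t + h \<Longrightarrow> norm (V \<sigma>) \<le> W"
    and x': "x' = x + h *\<^sub>R v - (h\<^sup>2/2) *\<^sub>R g x"
    and v': "v' = v - (h/2) *\<^sub>R (g x + g x')"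
  shows "norm ((X (t + h) - x') - (X t - x) - h *\<^sub>R (V t - v))
      \<le> h\<^sup>2/2 * L * norm (X t - x) + L * W * h ^ 3"
    and "norm ((V (t + h) - v') - (V t - v))
      \<le> h/2 * L * (norm (X t - x) + norm (X (t + h) - x')) + 3/2 * L * W * h\<^sup>2"
proof -
  have "(X (t + h) - x') - (X t - x) - h *\<^sub>R (V t - v)
      = (X (t + h) - X t - h *\<^sub>R V t + (h\<^sup>2/2) *\<^sub>R g (X t)) - (h\<^sup>2/2) *\<^sub>R (g (X t) - g x)"
    by (simp add: x' algebra_simps)
  then have "norm ((X (t + h) - x') - (X t - x) - h *\<^sub>R (V t - v))
      \<le> norm (X (t + h) - X t - h *\<^sub>R V t + (h\<^sup>2/2) *\<^sub>R g (X t)) + norm ((h\<^sup>2/2) *\<^sub>R (g (X t) - g x))"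
    by (metis norm_triangle_ineq4)
  also have "\<dots> \<le> L * W * h ^ 3 + h\<^sup>2/2 * (L * norm (X t - x))"
    using ham_traj_position_taylor[OF tr h W] g_lipschitz by (intro add_mono) (simp_all add: mult_left_mono)
  finally show "norm ((X (t + h) - x') - (X t - x) - h *\<^sub>R (V t - v))
      \<le> h\<^sup>2/2 * L * norm (X t - x) + L * W * h ^ 3"
    by (simp add: algebra_simps)
  have "(V (t + h) - v') - (V t - v)
      = (V (t + h) - V t + (h/2) *\<^sub>R (g (X t) + g (X (t + h))))
        - (h/2) *\<^sub>R ((g (X t) - g x) + (g (X (t + h)) - g x'))"
    by (simp add: v' algebra_simps)
  then have "norm ((V (t + h) - v') - (V t - v))
      \<le> norm (V (t + h) - V t + (h/2) *\<^sub>R (g (X t) + g (X (t + h))))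
        + norm ((h/2) *\<^sub>R ((g (X t) - g x) + (g (X (t + h)) - g x')))"
    by (metis norm_triangle_ineq4)
  also have "\<dots> \<le> 3/2 * L * W * h\<^sup>2 + h/2 * (L * norm (X t - x) + L * norm (X (t + h) - x'))"
  proof (rule add_mono)
    have "norm ((g (X t) - g x) + (g (X (t + h)) - g x'))
        \<le> L * norm (X t - x) + L * norm (X (t + h) - x')"
      using g_lipschitz by (intro norm_triangle_le add_mono) auto
    then show "norm ((h/2) *\<^sub>R ((g (X t) - g x) + (g (X (t + h)) - g x')))
        \<le> h/2 * (L * norm (X t - x) + L * norm (X (t + h) - x'))"
      using h by (simp add: mult_left_mono)
  qed (rule ham_traj_trapezoid_defect[OF tr h W])
  finally show "norm ((V (t + h) - v') - (V t - v))
      \<le> h/2 * L * (norm (X t - x) + norm (X (t + h) - x')) + 3/2 * L * W * h\<^sup>2"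
    by (simp add: algebra_simps)
qed

lemma leapfrog_global_error:
  assumes tr: "ham_traj g y u X V" and W: "\<And>s. 0 \<le> s \<Longrightarrow> s \<le> T \<Longrightarrow> norm (V s) \<le> W"
    and h: "0 \<le> h" and TN: "T = real N * h"
    and xs: "\<And>j. xs (Suc j) = xs j + h *\<^sub>R vs j - (h\<^sup>2/2) *\<^sub>R g (xs j)"
    and vs: "\<And>j. vs (Suc j) = vs j - (h/2) *\<^sub>R (g (xs j) + g (xs (Suc j)))"
    and A: "\<And>j. j \<le> N \<Longrightarrow> norm (X (real j * h) - xs j) \<le> A"
    and j: "j \<le> N"
  shows "norm (X (real j * h) - xs j - (y - xs 0) - (real j * h) *\<^sub>R (u - vs 0))
    \<le> L * (T\<^sup>2 + T * h / 2) * A + L * h * T * (3/2 * T + h) * W"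
proof -
  define e where "e j = X (real j * h) - xs j" for j
  define f where "f j = V (real j * h) - vs j" for j
  have W0: "0 \<le> W"
    using order_trans[OF norm_ge_zero W[of 0]] TN h by simp
  have step: "norm (e (Suc j) - e j - h *\<^sub>R f j) \<le> h\<^sup>2/2 * L * norm (e j) + L * W * h ^ 3"
    "norm (f (Suc j) - f j) \<le> h/2 * L * (norm (e j) + norm (e (Suc j))) + 3/2 * L * W * h\<^sup>2"
    if "j < N" for j
  proof -
    have "real (Suc j) * h \<le> real N * h"
      using that h by (intro mult_right_mono) auto
    then have "real j * h + h \<le> T"
      by (simp add: TN distrib_right)
    then have W_step: "norm (V \<sigma>) \<le> W" if "real j * h \<le> \<sigma>" "\<sigma> \<le> real j * h + h" for \<sigma>
      using that h W by (meson order_trans zero_le_mult_iff of_nat_0_le_iff)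
    note errors = leapfrog_step_error[where t = "real j * h" and x = "xs j" and v = "vs j",
        OF tr h W_step xs vs]
    have Suc_j: "e (Suc j) = X (real j * h + h) - xs (Suc j)" "f (Suc j) = V (real j * h + h) - vs (Suc j)"
      by (simp_all add: e_def f_def algebra_simps)
    show "norm (e (Suc j) - e j - h *\<^sub>R f j) \<le> h\<^sup>2/2 * L * norm (e j) + L * W * h ^ 3"
      using errors(1) unfolding Suc_j by (simp add: e_def f_def)
    show "norm (f (Suc j) - f j) \<le> h/2 * L * (norm (e j) + norm (e (Suc j))) + 3/2 * L * W * h\<^sup>2"
      using errors(2) unfolding Suc_j by (simp add: e_def f_def)
  qed
  have "norm (e j - e 0 - (real j * h) *\<^sub>R f 0)
      \<le> real j * (h * real N * (h * L * A + 3/2 * L * W * h\<^sup>2) + h\<^sup>2/2 * L * A + L * W * h ^ 3)"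
    using h L_nonneg W0 A step j unfolding e_def
    by (intro second_order_error_accumulation[where f = f]) auto
  also have "\<dots> \<le> real N * (h * real N * (h * L * A + 3/2 * L * W * h\<^sup>2) + h\<^sup>2/2 * L * A + L * W * h ^ 3)"
    using j h L_nonneg W0 order_trans[OF norm_ge_zero A[OF j]]
    by (intro mult_right_mono) auto
  also have "\<dots> = L * (T\<^sup>2 + T * h / 2) * A + L * h * T * (3/2 * T + h) * W"
    unfolding TN by (simp add: power2_eq_square power3_eq_cube field_simps)
  finally show ?thesis
    using ham_trajD(1,2)[OF tr] by (simp add: e_def f_def)
qed

end

lemma leapfrog_defect_budget:
  fixes T h L W nu ny :: real
  assumes T: "0 \<le> T" and h: "0 \<le> h" and L: "0 \<le> L" and small: "L * (T\<^sup>2 + T * h) \<le> 1/12"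
    and W0: "0 \<le> W" and W: "W \<le> (nu + L * T * ny) / (1 - L * T\<^sup>2)"
  shows "12 * (L * h * T * (3/2 * T + h) * W) \<le> 18/11 * (h * nu + h * L * T * ny)"
proof -
  have "L * T\<^sup>2 \<le> L * (T\<^sup>2 + T * h)"
    using L T h by (intro mult_left_mono) auto
  then have LT2: "L * T\<^sup>2 \<le> 1/12"
    using small by linarith
  have "L * T * (3/2 * T + h) \<le> 3/2 * (L * (T\<^sup>2 + T * h))"
    using L T h by (simp add: algebra_simps power2_eq_square mult_left_mono)
  then have "L * T * (3/2 * T + h) * (h * W) \<le> 1/8 * (h * W)"
    using small h W0 by (intro mult_right_mono) auto
  moreover have "W * (11/12) \<le> W * (1 - L * T\<^sup>2)"
    using LT2 W0 by (intro mult_left_mono) auto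
  then have "h * (W * 11/12) \<le> h * (nu + L * T * ny)"
    using W LT2 h by (intro mult_left_mono) (auto simp: pos_le_divide_eq)
  ultimately show ?thesis
    by (simp add: algebra_simps)
qed

lemma leapfrog_shadowing_arith:
  fixes T h L a d A D nu ny nv nx :: real
  assumes T: "0 < T" and h: "0 < h" "h \<le> T" and L: "0 \<le> L"
    and small: "L * (T\<^sup>2 + T * h) \<le> 1/12"
    and nonneg: "0 \<le> a" "0 \<le> d" "0 \<le> A" "0 \<le> nv" "0 \<le> nx"
    and eA: "A \<le> a + T * d + L * (T\<^sup>2 + T * h / 2) * A + D"
    and ed: "T * d \<le> a + L * (T\<^sup>2 + T * h / 2) * A + D"
    and D: "12 * D \<le> 18/11 * (h * nu + h * L * T * ny)"
    and nu: "nu \<le> nv + d" and ny: "ny \<le> nx + a"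
  shows "d \<le> 3 / (2 * T) * a + 7/5 * h * (1 / (5 * T) * nv + 7/36 * L * nx)"
proof -
  have "L * (T\<^sup>2 + T * h / 2) \<le> L * (T\<^sup>2 + T * h)"
    using L T h by (intro mult_left_mono) auto
  then have "12 * (L * (T\<^sup>2 + T * h / 2) * A) \<le> A"
    using small nonneg(3) mult_right_mono[of "L * (T\<^sup>2 + T * h / 2)" "1/12" A] by linarith
  then have "10 * (T * d) \<le> 12 * a + 12 * D"
    using eA ed by linarith
  moreover have "h * nu \<le> h * nv + T * d"
    using mult_left_mono[OF nu, of h] mult_right_mono[OF h(2) nonneg(2)] h by (simp add: algebra_simps)
  moreover have "h * L * T * ny \<le> h * L * T * nx + a / 12"
  proof -
    have "L * T * h \<le> L * (T\<^sup>2 + T * h)"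
      using L T by (simp add: algebra_simps)
    then have "h * L * T * a \<le> a / 12"
      using mult_right_mono[of "L * T * h" "1/12" a] small nonneg(1) by (simp add: algebra_simps)
    moreover have "h * L * T * ny \<le> h * L * T * (nx + a)"
      using ny L T h by (intro mult_left_mono) auto
    ultimately show ?thesis
      by (simp add: algebra_simps)
  qed
  moreover have "0 \<le> h * nv" "0 \<le> h * L * T * nx"
    using h L T nonneg by auto
  moreover have "11 * (12 * D) \<le> 18 * (h * nu) + 18 * (h * L * T * ny)"
    using D by simp
  ultimately have "T * d \<le> 3/2 * a + 7/25 * (h * nv) + 49/180 * (h * L * T * nx)"
    using nonneg(1) by linarith
  also have "\<dots> = T * (3 / (2 * T) * a + 7/5 * h * (1 / (5 * T) * nv + 7/36 * L * nx))"
    using T by (simp add: field_simps)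
  finally show ?thesis
    using T by simp
qed
context lipschitz_field
begin

lemma exact_flow_shadowing:
  assumes T: "0 < T" and small: "L * T\<^sup>2 \<le> 1/12"
    and endpoint: "ham_q g T x v = ham_q g T y u"
  shows "norm (u - v) \<le> 3 / (2 * T) * norm (x - y)"
proof -
  obtain X V where tr: "ham_traj g y u X V"
    by (rule ham_traj_exists)
  obtain X' V' where tr': "ham_traj g x v X' V'"
    by (rule ham_traj_exists)
  have "X T = X' T"
    using endpoint ham_q_eqI[OF _ _ tr] ham_q_eqI[OF _ _ tr'] T small by simp
  then have "T *\<^sub>R (u - v) - (x - y) = - (X T - X' T - (y - x) - T *\<^sub>R (u - v))"
    by (simp add: algebra_simps)
  then have "norm (T *\<^sub>R (u - v) - (x - y)) = norm (X T - X' T - (y - x) - T *\<^sub>R (u - v))"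
    by (metis norm_minus_cancel)
  also have "\<dots> \<le> L * T\<^sup>2 / (1 - L * T\<^sup>2) * (norm (y - x) + T * norm (u - v))"
    using T small by (intro ham_traj_compare[OF _ _ tr tr']) auto
  also have "\<dots> \<le> 1/11 * (norm (y - x) + T * norm (u - v))"
    using T small L_nonneg by (intro mult_right_mono) (simp_all add: field_simps)
  finally have "norm (T *\<^sub>R (u - v) - (x - y)) \<le> 1/11 * (norm (x - y) + T * norm (u - v))"
    by (simp add: norm_minus_commute)
  moreover have "T * norm (u - v) \<le> norm (T *\<^sub>R (u - v) - (x - y)) + norm (x - y)"
    using T norm_triangle_ineq2[of "T *\<^sub>R (u - v)" "x - y"] by simp
  ultimately have "T * norm (u - v) \<le> 6/5 * norm (x - y)"
    by (simp add: algebra_simps)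
  then have "T * norm (u - v) \<le> 3/2 * norm (x - y)"
    using norm_ge_zero[of "x - y"] by linarith
  then show ?thesis
    using T by (simp add: field_simps)
qed

lemma leapfrog_max_error_bounds:
  assumes tr: "ham_traj g y u X V" and W: "\<And>s. 0 \<le> s \<Longrightarrow> s \<le> T \<Longrightarrow> norm (V s) \<le> W"
    and h: "0 \<le> h" and TN: "T = real N * h"
    and xs: "\<And>j. xs (Suc j) = xs j + h *\<^sub>R vs j - (h\<^sup>2/2) *\<^sub>R g (xs j)"
    and vs: "\<And>j. vs (Suc j) = vs j - (h/2) *\<^sub>R (g (xs j) + g (xs (Suc j)))"
    and start: "xs 0 = x" "vs 0 = v" and endpoint: "X T = xs N"
  obtains A where "0 \<le> A"
    "A \<le> norm (x - y) + T * norm (u - v) + L * (T\<^sup>2 + T * h / 2) * A + L * h * T * (3/2 * T + h) * W"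
    "T * norm (u - v) \<le> norm (x - y) + L * (T\<^sup>2 + T * h / 2) * A + L * h * T * (3/2 * T + h) * W"
proof -
  define A where "A = Max ((\<lambda>j. norm (X (real j * h) - xs j)) ` {..N})"
  have A: "\<And>j. j \<le> N \<Longrightarrow> norm (X (real j * h) - xs j) \<le> A"
    by (auto simp: A_def)
  have "A \<in> (\<lambda>j. norm (X (real j * h) - xs j)) ` {..N}"
    unfolding A_def by (rule Max_in) auto
  then obtain j0 where j0: "j0 \<le> N" "norm (X (real j0 * h) - xs j0) = A"
    by auto
  define R where "R = L * (T\<^sup>2 + T * h / 2) * A + L * h * T * (3/2 * T + h) * W"
  have error: "norm (X (real j * h) - xs j - (y - x) - (real j * h) *\<^sub>R (u - v)) \<le> R" if "j \<le> N" for j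
    unfolding R_def using leapfrog_global_error[where T = T and W = W and A = A, OF tr W h TN xs vs A that]
    by (simp add: start)
  have "real j0 * h \<le> T"
    using j0 h TN by (simp add: mult_right_mono)
  have "A = norm ((X (real j0 * h) - xs j0 - (y - x) - (real j0 * h) *\<^sub>R (u - v))
      + (y - x) + (real j0 * h) *\<^sub>R (u - v))"
    using j0(2) by simp
  also have "\<dots> \<le> R + norm (x - y) + T * norm (u - v)"
    using error[OF j0(1)] \<open>real j0 * h \<le> T\<close> h
    by (intro norm_triangle_le add_mono) (auto simp: norm_minus_commute mult_right_mono)
  finally have max: "A \<le> R + norm (x - y) + T * norm (u - v)" .
  have "T * norm (u - v) = norm ((X (real N * h) - xs N - (y - x) - (real N * h) *\<^sub>R (u - v)) + (y - x))"
    using endpoint h by (simp add: TN abs_mult)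
  also have "\<dots> \<le> R + norm (x - y)"
    using error[of N] by (intro norm_triangle_le add_mono) (auto simp: norm_minus_commute)
  finally have last: "T * norm (u - v) \<le> R + norm (x - y)" .
  show ?thesis
  proof (rule that)
    show "0 \<le> A"
      using order_trans[OF norm_ge_zero A[of 0]] by simp
  qed (use max last in \<open>simp_all add: R_def\<close>)
qed

lemma leapfrog_shadowing:
  assumes g0: "g 0 = 0" and h: "0 < h" and T: "0 < T" and TN: "T = real N * h"
    and small: "L * (T\<^sup>2 + T * h) \<le> 1/12"
    and endpoint: "fst ((lf_step g h ^^ N) (x, v)) = ham_q g T y u"
  shows "norm (u - v) \<le> 3 / (2 * T) * norm (x - y) + 7/5 * h * (1 / (5 * T) * norm v + 7/36 * L * norm x)"
proof -
  have small': "L * T\<^sup>2 \<le> 1/12"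
    using small L_nonneg h T by (smt (verit) mult_left_mono mult_pos_pos)
  obtain X V where tr: "ham_traj g y u X V"
    by (rule ham_traj_exists)
  define xs where "xs j = fst ((lf_step g h ^^ j) (x, v))" for j
  define vs where "vs j = snd ((lf_step g h ^^ j) (x, v))" for j
  have xs: "xs (Suc j) = xs j + h *\<^sub>R vs j - (h\<^sup>2/2) *\<^sub>R g (xs j)"
    and vs: "vs (Suc j) = vs j - (h/2) *\<^sub>R (g (xs j) + g (xs (Suc j)))" for j
    by (simp_all add: xs_def vs_def lf_step_def Let_def)
  have "X T = xs N"
    using endpoint ham_q_eqI[OF _ _ tr] T small' by (simp add: xs_def)
  define W where "W = (norm u + L * T * norm y) / (1 - L * T\<^sup>2)"
  have W: "\<And>s. 0 \<le> s \<Longrightarrow> s \<le> T \<Longrightarrow> norm (V s) \<le> W"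
    unfolding W_def using ham_traj_velocity_bound[OF g0 _ _ tr] T small' by simp
  then have "0 \<le> W"
    using order_trans[OF norm_ge_zero W[of 0]] T by simp
  obtain A where A: "0 \<le> A"
    and eA: "A \<le> norm (x - y) + T * norm (u - v) + L * (T\<^sup>2 + T * h / 2) * A + L * h * T * (3/2 * T + h) * W"
    and ed: "T * norm (u - v) \<le> norm (x - y) + L * (T\<^sup>2 + T * h / 2) * A + L * h * T * (3/2 * T + h) * W"
    by (rule leapfrog_max_error_bounds[OF tr W _ TN xs vs _ _ \<open>X T = xs N\<close>]) (use h in \<open>simp_all add: xs_def vs_def\<close>)
  have budget: "12 * (L * h * T * (3/2 * T + h) * W) \<le> 18/11 * (h * norm u + h * L * T * norm y)"
    using T h L_nonneg small \<open>0 \<le> W\<close> by (intro leapfrog_defect_budget) (simp_all add: W_def)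
  have "h \<le> T"
    using TN T h by (cases N) auto
  moreover have "norm u \<le> norm v + norm (u - v)" "norm y \<le> norm x + norm (x - y)"
    using norm_triangle_sub[of u v] norm_triangle_sub[of y x] by (simp_all add: norm_minus_commute)
  ultimately show ?thesis
    using leapfrog_shadowing_arith[OF T h _ L_nonneg small _ _ A _ _ eA ed budget] by simp
qed
end

theorem lemma8:
  fixes f :: "'a::euclidean_space \<Rightarrow> real"
    and g :: "'a \<Rightarrow> 'a"
    and H :: "'a \<Rightarrow> 'a \<Rightarrow>\<^sub>L 'a"
    and L T h :: real
    and x y :: "'a"
    and \<Phi> :: "'a \<Rightarrow> 'a"
  assumes min0: "\<forall>z. f 0 \<le> f z" and f0: "f 0 = 0"
    and grad: "\<forall>z. (f has_derivative (\<lambda>u. g z \<bullet> u)) (at z)"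
    and hess: "\<forall>z. (g has_derivative blinfun_apply (H z)) (at z)"
    and hess_cont: "continuous_on UNIV H"
    and hess_bound: "\<forall>z. norm (H z) \<le> L"
    and T_pos: "T > 0" and h_nonneg: "h \<ge> 0"
    and grid: "h > 0 \<longrightarrow> (\<exists>N::nat. T = real N * h)"
    and small: "L * (T^2 + T * h) \<le> 1/12"
    and Phi: "\<forall>w. lf_q g T h x w = ham_q g T y (\<Phi> w)"
  shows "\<forall>v. norm (\<Phi> v - v) \<le> 3 / (2 * T) * norm (x - y)
             + 7/5 * h * (1 / (5 * T) * norm v + 7/36 * L * norm x)"
proof
  fix v
  \<comment> \<open>Only the Lipschitz bound on \<open>g\<close> and \<open>g 0 = 0\<close> enter.\<close>
  have "0 \<le> L"
    using hess_bound[rule_format, of 0] norm_ge_zero[of "H 0"] by linarith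
  then have "L-lipschitz_on UNIV g"
    using hess hess_bound by (intro bounded_derivative_imp_lipschitz) (auto simp flip: norm_blinfun.rep_eq)
  then interpret lipschitz_field g L
    by unfold_locales
  have "(\<lambda>u. g 0 \<bullet> u) = (\<lambda>u. 0)"
    by (rule differential_zero_maxmin[of 0 UNIV f]) (use grad min0 in auto)
  then have g0: "g 0 = 0"
    by (metis inner_eq_zero_iff)
  show "norm (\<Phi> v - v) \<le> 3 / (2 * T) * norm (x - y) + 7/5 * h * (1 / (5 * T) * norm v + 7/36 * L * norm x)"
  proof (cases "h = 0")
    case True
    then have "ham_q g T x v = ham_q g T y (\<Phi> v)"
      using Phi by (simp add: lf_q_def)
    then show ?thesis
      using exact_flow_shadowing[OF T_pos] small True by simp
  next
    case False
    with h_nonneg grid obtain N :: nat where h: "0 < h" and TN: "T = real N * h"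
      by auto
    then have "nat \<lfloor>T / h\<rfloor> = N"
      by simp
    then show ?thesis
      using leapfrog_shadowing[OF g0 h T_pos TN small] Phi[rule_format, of v] h by (simp add: lf_q_def)
  qed
qed

end
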